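(* Let $\psi\subseteq\mathcal{E}_1^\omega\times\mathcal{E}_2^\omega$ be a safety relation. Then for all $\tau_1\in\mathcal{E}_1^\omega,\tau_2\in\mathcal{E}_2^\omega$: $(\tau_1,\tau_2)\in\psi\iff(\tau_1,\tau_2)\in|\psi|_{\mathit{safe}}\iff(\tau_1,\tau_2,\psi)\in\texttt{safe}$.
   Context: For $\tau\in\mathcal{E}^\omega$, $\tau[0..n)$ denotes its finite prefix of length $n$. Safety closure: $|\psi|_{\mathit{safe}}=\{(\tau_1,\tau_2)\mid\forall n\in\mathbb{N}.\ \exists\tau_1'\in\mathcal{E}_1^\omega,\tau_2'\in\mathcal{E}_2^\omega.\ (\tau_1[0..n)\cdot\tau_1',\ \tau_2[0..n)\cdot\tau_2')\in\psi\}$. A trace relation $\psi$ is a safety relation iff $|\psi|_{\mathit{safe}}\subseteq\psi$. Derivative: $\Delta_{e_1,e_2}(\psi)=\{(\tau_1,\tau_2)\mid(e_1\tau_1,e_2\tau_2)\in\psi\}$. $\texttt{safe}$ is the greatest fixed point of the monotone operator $\texttt{safeF}(C)=\{(e_1\tau_1,e_2\tau_2,\psi)\mid\Delta_{e_1,e_2}(\psi)\neq\emptyset\wedge(\tau_1,\tau_2,\Delta_{e_1,e_2}(\psi))\in C\}$ on subsets of $\mathcal{E}_1^\omega\times\mathcal{E}_2^\omega\times\mathcal{P}(\mathcal{E}_1^\omega\times\mathcal{E}_2^\omega)$. *)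

theory Defs
  imports Main "HOL-Library.Omega_Words_Fun"
begin

type_synonym ('e1, 'e2) trel = "('e1 word \<times> 'e2 word) set"

definition safe_closure :: "('e1, 'e2) trel \<Rightarrow> ('e1, 'e2) trel" where
  "safe_closure \<psi> = {(\<tau>1, \<tau>2). \<forall>n::nat. \<exists>\<tau>1' \<tau>2'.
      (prefix n \<tau>1 \<frown> \<tau>1', prefix n \<tau>2 \<frown> \<tau>2') \<in> \<psi>}"

definition safety_relation :: "('e1, 'e2) trel \<Rightarrow> bool" where
  "safety_relation \<psi> \<longleftrightarrow> safe_closure \<psi> \<subseteq> \<psi>"

definition deriv :: "'e1 \<Rightarrow> 'e2 \<Rightarrow> ('e1, 'e2) trel \<Rightarrow> ('e1, 'e2) trel" where
  "deriv e1 e2 \<psi> = {(\<tau>1, \<tau>2). ([e1] \<frown> \<tau>1, [e2] \<frown> \<tau>2) \<in> \<psi>}"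

definition safeF :: "('e1 word \<times> 'e2 word \<times> ('e1, 'e2) trel) set
                     \<Rightarrow> ('e1 word \<times> 'e2 word \<times> ('e1, 'e2) trel) set" where
  "safeF C = {([e1] \<frown> \<tau>1, [e2] \<frown> \<tau>2, \<psi>) | e1 \<tau>1 e2 \<tau>2 \<psi>.
      deriv e1 e2 \<psi> \<noteq> {} \<and> (\<tau>1, \<tau>2, deriv e1 e2 \<psi>) \<in> C}"

lemma mono_safeF: "mono safeF"
  unfolding mono_def safeF_def by blast

definition safe :: "('e1 word \<times> 'e2 word \<times> ('e1, 'e2) trel) set" where
  "safe = gfp safeF"

end

theory Submission
  imports Defs
begin

text \<open>Stripping one leading event pair turns extendable prefixes for \<open>\<psi>\<close> into
  extendable prefixes for the derivative, so the safety closure commutes with derivatives. Hence the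
  closure is a post-fixed point of \<open>safeF\<close> and lies in \<open>safe\<close> by coinduction; conversely,
  unfolding \<open>safe\<close> once per event shows by induction on \<open>n\<close> that every prefix of length \<open>n\<close>
  is extendable. For a safety relation the closure is \<open>\<psi>\<close> itself.\<close>

definition prefix_extendable :: "nat \<Rightarrow> ('e1, 'e2) trel \<Rightarrow> 'e1 word \<Rightarrow> 'e2 word \<Rightarrow> bool" where
  "prefix_extendable n \<psi> \<tau>1 \<tau>2 \<longleftrightarrow> (\<exists>\<tau>1' \<tau>2'. (prefix n \<tau>1 \<frown> \<tau>1', prefix n \<tau>2 \<frown> \<tau>2') \<in> \<psi>)"

lemma safe_closure_iff_prefix_extendable:
  "(\<tau>1, \<tau>2) \<in> safe_closure \<psi> \<longleftrightarrow> (\<forall>n. prefix_extendable n \<psi> \<tau>1 \<tau>2)"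
  unfolding safe_closure_def prefix_extendable_def by blast

lemma prefix_Suc_build: "prefix (Suc n) (a ## w) = a # prefix n w"
  by (simp add: subsequence_def upt_conv_Cons map_Suc_upt[symmetric] del: upt_Suc)

lemma prefix_extendable_0_iff: "prefix_extendable 0 \<psi> \<tau>1 \<tau>2 \<longleftrightarrow> \<psi> \<noteq> {}"
  unfolding prefix_extendable_def by auto

lemma prefix_extendable_Suc_build_iff:
  "prefix_extendable (Suc n) \<psi> (e1 ## \<tau>1) (e2 ## \<tau>2) \<longleftrightarrow> prefix_extendable n (deriv e1 e2 \<psi>) \<tau>1 \<tau>2"
  unfolding prefix_extendable_def deriv_def by (simp add: prefix_Suc_build)

lemma safe_closure_build_iff:
  "(e1 ## \<tau>1, e2 ## \<tau>2) \<in> safe_closure \<psi> \<longleftrightarrow> (\<tau>1, \<tau>2) \<in> safe_closure (deriv e1 e2 \<psi>)"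
proof -
  have "\<psi> \<noteq> {}" if "(\<tau>1, \<tau>2) \<in> safe_closure (deriv e1 e2 \<psi>)"
    using that unfolding safe_closure_def deriv_def by auto
  then show ?thesis
    unfolding safe_closure_iff_prefix_extendable
    by (metis not0_implies_Suc prefix_extendable_0_iff prefix_extendable_Suc_build_iff)
qed

lemma safe_unfold: "safe = safeF safe"
  unfolding safe_def by (rule gfp_unfold[OF mono_safeF])

lemma safe_prefix_extendable: "(\<tau>1, \<tau>2, \<psi>) \<in> safe \<Longrightarrow> prefix_extendable n \<psi> \<tau>1 \<tau>2"
proof (induction n arbitrary: \<tau>1 \<tau>2 \<psi>)
  case 0
  then have "(\<tau>1, \<tau>2, \<psi>) \<in> safeF safe"
    using safe_unfold by blast
  then show ?case
    unfolding safeF_def prefix_extendable_0_iff deriv_def by blast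
next
  case (Suc n)
  then have "(\<tau>1, \<tau>2, \<psi>) \<in> safeF safe"
    using safe_unfold by blast
  then obtain e1 e2 \<sigma>1 \<sigma>2 where "\<tau>1 = e1 ## \<sigma>1" "\<tau>2 = e2 ## \<sigma>2"
    and "(\<sigma>1, \<sigma>2, deriv e1 e2 \<psi>) \<in> safe"
    unfolding safeF_def by auto
  with Suc.IH show ?case
    by (simp add: prefix_extendable_Suc_build_iff)
qed

lemma safe_closure_imp_safe: "(\<tau>1, \<tau>2) \<in> safe_closure \<psi> \<Longrightarrow> (\<tau>1, \<tau>2, \<psi>) \<in> safe"
proof -
  let ?C = "{(\<tau>1, \<tau>2, \<psi>). (\<tau>1, \<tau>2) \<in> safe_closure \<psi>}"
  have "?C \<subseteq> safeF ?C"
  proof (rule subsetI, clarify)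
    fix \<tau>1 \<tau>2 \<psi>
    assume closure: "(\<tau>1, \<tau>2) \<in> safe_closure \<psi>"
    let ?\<Delta> = "deriv (\<tau>1 0) (\<tau>2 0) \<psi>"
    have tail: "(suffix 1 \<tau>1, suffix 1 \<tau>2) \<in> safe_closure ?\<Delta>"
      using closure safe_closure_build_iff by (metis build_split)
    then have "?\<Delta> \<noteq> {}"
      using safe_closure_iff_prefix_extendable prefix_extendable_0_iff by blast
    with tail have "([\<tau>1 0] \<frown> suffix 1 \<tau>1, [\<tau>2 0] \<frown> suffix 1 \<tau>2, \<psi>) \<in> safeF ?C"
      unfolding safeF_def by blast
    then show "(\<tau>1, \<tau>2, \<psi>) \<in> safeF ?C"
      by simp
  qed
  then have "?C \<subseteq> safe"
    unfolding safe_def by (rule gfp_upperbound)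
  then show "(\<tau>1, \<tau>2) \<in> safe_closure \<psi> \<Longrightarrow> (\<tau>1, \<tau>2, \<psi>) \<in> safe"
    by blast
qed

lemma safe_iff_safe_closure: "(\<tau>1, \<tau>2, \<psi>) \<in> safe \<longleftrightarrow> (\<tau>1, \<tau>2) \<in> safe_closure \<psi>"
  using safe_prefix_extendable safe_closure_imp_safe safe_closure_iff_prefix_extendable by blast

lemma subset_safe_closure: "\<psi> \<subseteq> safe_closure \<psi>"
  unfolding safe_closure_def by (auto, metis prefix_suffix)

theorem mainTheorem4:
  fixes \<psi> :: "('e1, 'e2) trel"
  assumes "safety_relation \<psi>"
  shows "\<forall>\<tau>1 \<tau>2. ((\<tau>1, \<tau>2) \<in> \<psi> \<longleftrightarrow> (\<tau>1, \<tau>2) \<in> safe_closure \<psi>)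
                 \<and> ((\<tau>1, \<tau>2) \<in> safe_closure \<psi> \<longleftrightarrow> (\<tau>1, \<tau>2, \<psi>) \<in> safe)"
proof -
  have "safe_closure \<psi> = \<psi>"
    using assms subset_safe_closure unfolding safety_relation_def by blast
  then show ?thesis
    using safe_iff_safe_closure by blast
qed

end
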